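(* For an integer $j\ge 2$ let $\bar\alpha_j$ be the largest $\alpha\ge 0$ such that $\left(1-e^{-\alpha^{j-1}x^{j-1}}\right)^{j-1}\le x$ for all $x\in(0,1]$, and for $\delta\in(0,1)$ let $\gamma_0(j,\delta)=\bar\alpha_j^{-(j-1)/j}\,j\,\delta^{-1/j}$. Then for every $\delta\in(0,e^{-1})$, choosing $j=\lceil\ln(1/\delta)\rceil$ gives $$\gamma_0(j,\delta)\le e\,\left\lceil \ln\tfrac{1}{\delta}\right\rceil .$$
   Context: $\gamma_0(j,\delta)$ is the minimum oversampling ratio (number of measurements divided by number of nonzero signal entries) for LM1 reconstruction with $(j,k)$-regular LDPC measurement matrices at sparsity fraction $\delta$. *)

theory Defs
  imports "HOL-Analysis.Analysis"
begin

definition alpha_admissible :: "nat \<Rightarrow> real \<Rightarrow> bool" where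
  "alpha_admissible j \<alpha> \<longleftrightarrow> \<alpha> \<ge> 0 \<and>
     (\<forall>x::real. 0 < x \<and> x \<le> 1 \<longrightarrow>
        (1 - exp (- (\<alpha> ^ (j - 1) * x ^ (j - 1)))) ^ (j - 1) \<le> x)"

definition alpha_bar :: "nat \<Rightarrow> real" where
  "alpha_bar j = (GREATEST \<alpha>. alpha_admissible j \<alpha>)"

definition gamma0 :: "nat \<Rightarrow> real \<Rightarrow> real" where
  "gamma0 j \<delta> = alpha_bar j powr (- (real j - 1) / real j) * real j * \<delta> powr (- 1 / real j)"

end

theory Submission
  imports Defs
begin

(*
  The bound follows from two independent estimates on the factors of
    gamma0 j \<delta> = alpha_bar j powr (-(j-1)/j) * j * \<delta> powr (-1/j).

  (1) alpha_bar j \<ge> 1 for every j \<ge> 2, so the first factor is at most 1.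
      The constant 1 is admissible because 1 - exp(-t) \<le> t and x^m \<le> x on
      (0,1].  To know that the GREATEST admissible value exists and dominates 1,
      we show that the admissible set is closed (an intersection of closed
      sublevel sets) and bounded above (evaluating at x = 1/2 with Bernoulli's
      inequality shows large alphas violate the constraint); a closed, bounded,
      nonempty set of reals contains its supremum.
  (2) If ln(1/\<delta>) \<le> j then \<delta> powr (-1/j) = exp(ln(1/\<delta>)/j) \<le> e.

  Together they give gamma0 j \<delta> \<le> e * j whenever j \<ge> 2 and ln(1/\<delta>) \<le> j;
  the corollary takes j = \<lceil>ln(1/\<delta>)\<rceil>, which is \<ge> 2 because \<delta> < 1/e.
*)

lemma alpha_admissible_iff:
  "alpha_admissible j \<alpha> \<longleftrightarrow> \<alpha> \<ge> 0 \<and>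
     (\<forall>x\<in>{0<..1}. (1 - exp (- (\<alpha> ^ (j - 1) * x ^ (j - 1)))) ^ (j - 1) \<le> x)"
  unfolding alpha_admissible_def by auto

text \<open>The constant 1 is admissible: 1 - exp(-x^m) \<le> x^m \<le> x, and raising a
  number in [0,1] to the power m only decreases it.\<close>
lemma one_admissible:
  assumes "j \<ge> 2"
  shows "alpha_admissible j 1"
  unfolding alpha_admissible_iff
proof (intro conjI ballI)
  fix x :: real assume "x \<in> {0<..1}"
  hence x: "0 < x" "x \<le> 1" by auto
  define m where "m = j - 1"
  have m: "m \<ge> 1" using assms by (simp add: m_def)
  have xm_le: "x ^ m \<le> x" using power_decreasing[of 1 m x] m x by simp
  have xm_le1: "x ^ m \<le> 1" using power_le_one[of x m] x by simp
  have "1 - exp (- (x ^ m)) \<le> x ^ m"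
    using exp_ge_add_one_self[of "- (x ^ m)"] by linarith
  hence "(1 - exp (- (x ^ m))) ^ m \<le> (x ^ m) ^ m"
    by (intro power_mono) (use x in simp_all)
  also have "\<dots> \<le> x ^ m"
    using power_decreasing[of 1 m "x ^ m"] m x xm_le1 by simp
  finally show "(1 - exp (- (1 ^ (j - 1) * x ^ (j - 1)))) ^ (j - 1) \<le> x"
    using xm_le by (simp add: m_def)
qed simp

text \<open>Admissible values are bounded above: if \<alpha>/2 exceeded 1 + ln(2m), then
  at x = 1/2 the quantity t = (\<alpha>/2)^m satisfies m exp(-t) < 1/2, and Bernoulli's
  inequality gives (1 - exp(-t))^m > 1/2, contradicting admissibility.\<close>
lemma admissible_bounded:
  assumes "j \<ge> 2" "alpha_admissible j \<alpha>"
  shows "\<alpha> \<le> 2 + 2 * ln (2 * real (j - 1))"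
proof (rule ccontr)
  define m where "m = j - 1"
  have m: "m \<ge> 1" using assms(1) by (simp add: m_def)
  assume "\<not> ?thesis"
  hence big: "\<alpha> / 2 > 1 + ln (2 * real m)" unfolding m_def by linarith
  have "ln (2 * real m) \<ge> 0" using m by simp
  hence half_gt1: "\<alpha> / 2 > 1" using big by linarith
  define t where "t = (\<alpha> / 2) ^ m"
  have "\<alpha> / 2 \<le> t"
    unfolding t_def using power_increasing[of 1 m "\<alpha> / 2"] m half_gt1 by simp
  hence "t > ln (2 * real m)" using big by linarith
  hence "exp (- t) < exp (- ln (2 * real m))" by simp
  also have "\<dots> = inverse (2 * real m)" using m by (simp add: exp_minus)
  finally have "exp (- t) < inverse (2 * real m)" .
  hence small: "real m * exp (- t) < 1 / 2"
    using m by (simp add: field_simps)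
  have "1 + real m * (- exp (- t)) \<le> (1 + (- exp (- t))) ^ m"
    by (rule Bernoulli_inequality) (use half_gt1 in \<open>simp add: t_def\<close>)
  hence "(1 - exp (- t)) ^ m > 1 / 2" using small by simp
  moreover have "(1 - exp (- (\<alpha> ^ m * (1/2) ^ m))) ^ m \<le> 1 / 2"
    using assms(2) unfolding alpha_admissible_iff m_def
    by (elim conjE bspec) simp
  moreover have "\<alpha> ^ m * (1/2) ^ m = t" unfolding t_def by (simp add: power_divide)
  ultimately show False by simp
qed

lemma closed_admissible: "closed {\<alpha>. alpha_admissible j \<alpha>}"
proof -
  have "{\<alpha>. alpha_admissible j \<alpha>} = {\<alpha>. 0 \<le> \<alpha>} \<inter>
     (\<Inter>x\<in>{0<..1}. {\<alpha>. (1 - exp (- (\<alpha> ^ (j - 1) * x ^ (j - 1)))) ^ (j - 1) \<le> x})"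
    unfolding alpha_admissible_iff by auto
  also have "closed \<dots>"
    by (intro closed_Int closed_INT ballI closed_Collect_le continuous_intros)
  finally show ?thesis .
qed

lemma alpha_bar_ge_one:
  assumes j: "j \<ge> 2"
  shows "alpha_bar j \<ge> 1"
proof -
  define S where "S = {\<alpha>. alpha_admissible j \<alpha>}"
  have one: "1 \<in> S" using one_admissible[OF j] by (simp add: S_def)
  have bdd: "bdd_above S"
    using admissible_bounded[OF j] unfolding S_def by (intro bdd_aboveI) auto
  have "Sup S \<in> S"
    using closed_contains_Sup[of S] one bdd closed_admissible by (auto simp: S_def)
  moreover have "\<alpha> \<le> Sup S" if "alpha_admissible j \<alpha>" for \<alpha>
    using that bdd by (intro cSup_upper) (simp_all add: S_def)
  ultimately have "alpha_bar j = Sup S"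
    unfolding alpha_bar_def S_def by (intro Greatest_equality) simp_all
  moreover have "1 \<le> Sup S" using one bdd by (rule cSup_upper)
  ultimately show ?thesis by simp
qed

lemma delta_factor_le_e:
  assumes "0 < \<delta>" "j > 0" "ln (1 / \<delta>) \<le> real j"
  shows "\<delta> powr (- 1 / real j) \<le> exp 1"
proof -
  have "\<delta> powr (- 1 / real j) = exp (ln (1 / \<delta>) / real j)"
    using assms(1) by (simp add: powr_def ln_div)
  also have "\<dots> \<le> exp 1" using assms(2,3) by simp
  finally show ?thesis .
qed

lemma gamma0_le:
  assumes "0 < \<delta>" "j \<ge> 2" "ln (1 / \<delta>) \<le> real j"
  shows "gamma0 j \<delta> \<le> exp 1 * real j"
proof -
  have "alpha_bar j powr (- (real j - 1) / real j) \<le> alpha_bar j powr 0"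
    using alpha_bar_ge_one[OF assms(2)] assms(2)
    by (intro powr_mono) (simp_all add: divide_nonpos_pos)
  hence alpha_factor: "alpha_bar j powr (- (real j - 1) / real j) \<le> 1"
    using alpha_bar_ge_one[OF assms(2)] by simp
  have "gamma0 j \<delta> \<le> 1 * real j * exp 1"
    unfolding gamma0_def
    using alpha_factor delta_factor_le_e[OF assms(1) _ assms(3)] assms(2)
    by (intro mult_mono) simp_all
  thus ?thesis by (simp add: mult.commute)
qed

theorem corollary2:
  fixes \<delta> :: real
  assumes "0 < \<delta>" and "\<delta> < exp (- 1)"
  shows "gamma0 (nat \<lceil>ln (1 / \<delta>)\<rceil>) \<delta> \<le> exp 1 * real_of_int \<lceil>ln (1 / \<delta>)\<rceil>"
proof -
  define L where "L = ln (1 / \<delta>)"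
  have "ln \<delta> < -1"
    using assms ln_less_cancel_iff[of \<delta> "exp (- 1)"] by simp
  hence L_gt1: "L > 1" unfolding L_def using assms(1) by (simp add: ln_div)
  have j_eq: "real (nat \<lceil>L\<rceil>) = real_of_int \<lceil>L\<rceil>" using L_gt1 by simp
  have "nat \<lceil>L\<rceil> \<ge> 2" using L_gt1 j_eq by linarith
  moreover have "L \<le> real (nat \<lceil>L\<rceil>)" using j_eq by linarith
  ultimately have "gamma0 (nat \<lceil>L\<rceil>) \<delta> \<le> exp 1 * real (nat \<lceil>L\<rceil>)"
    using gamma0_le[OF assms(1)] unfolding L_def by blast
  thus ?thesis using j_eq unfolding L_def by simp
qed

end
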